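(* Let $A$ be a nonempty finite set with $|A|=n$ and $\Sigma\in\mathbb{R}$. The map $\varphi$ defined by $\varphi(d)(x,y)=d(x,\cdot)+d(y,\cdot)-d(x,y)-d(\cdot,\cdot)+\Sigma/n$ is a bijection from the set of metrics on $A$ onto the set of $\Sigma$-proximities on $A$, and its inverse is the map $\psi$ given by $\psi(\sigma)(x,y)=\tfrac12(\sigma(x,x)+\sigma(y,y))-\sigma(x,y)$.
   Context: A metric on $A$ is a function $d:A^2\to\mathbb{R}$ such that for all $x,y,z\in A$: $d(x,y)=0$ iff $x=y$, and $d(x,y)+d(x,z)-d(y,z)\ge 0$. Notation: $d(x,\cdot)=\frac1n\sum_{t\in A}d(x,t)$, $d(\cdot,\cdot)=\frac1{n^2}\sum_{s,t\in A}d(s,t)$. A function $\sigma:A^2\to\mathbb{R}$ is a $\Sigma$-proximity on $A$ if for all $x,y,z\in A$: (1) $\sum_{t\in A}\sigma(x,t)=\Sigma$; (2) $\sigma(x,y)+\sigma(x,z)-\sigma(y,z)\le\sigma(x,x)$, with strict inequality whenever $z=y$ and $x\ne y$. *)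

theory Defs
  imports Complex_Main
begin

text \<open>Functions on A^2 are modelled as curried real-valued functions that are
  extensional on A x A (value undefined outside A x A), so that equality of
  functions means equality on A x A.\<close>

definition ext2 :: "'a set \<Rightarrow> ('a \<Rightarrow> 'a \<Rightarrow> real) \<Rightarrow> bool" where
  "ext2 A f \<longleftrightarrow> (\<forall>x y. (x \<notin> A \<or> y \<notin> A) \<longrightarrow> f x y = undefined)"

definition is_metric :: "'a set \<Rightarrow> ('a \<Rightarrow> 'a \<Rightarrow> real) \<Rightarrow> bool" where
  "is_metric A d \<longleftrightarrow> ext2 A d \<and>
     (\<forall>x\<in>A. \<forall>y\<in>A. d x y = 0 \<longleftrightarrow> x = y) \<and>
     (\<forall>x\<in>A. \<forall>y\<in>A. \<forall>z\<in>A. d x y + d x z - d y z \<ge> 0)"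

definition is_proximity :: "'a set \<Rightarrow> real \<Rightarrow> ('a \<Rightarrow> 'a \<Rightarrow> real) \<Rightarrow> bool" where
  "is_proximity A \<Sigma> \<sigma> \<longleftrightarrow> ext2 A \<sigma> \<and>
     (\<forall>x\<in>A. (\<Sum>t\<in>A. \<sigma> x t) = \<Sigma>) \<and>
     (\<forall>x\<in>A. \<forall>y\<in>A. \<forall>z\<in>A. \<sigma> x y + \<sigma> x z - \<sigma> y z \<le> \<sigma> x x) \<and>
     (\<forall>x\<in>A. \<forall>y\<in>A. x \<noteq> y \<longrightarrow> \<sigma> x y + \<sigma> x y - \<sigma> y y < \<sigma> x x)"

definition row_mean :: "'a set \<Rightarrow> ('a \<Rightarrow> 'a \<Rightarrow> real) \<Rightarrow> 'a \<Rightarrow> real" where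
  "row_mean A d x = (\<Sum>t\<in>A. d x t) / real (card A)"

definition total_mean :: "'a set \<Rightarrow> ('a \<Rightarrow> 'a \<Rightarrow> real) \<Rightarrow> real" where
  "total_mean A d = (\<Sum>s\<in>A. \<Sum>t\<in>A. d s t) / (real (card A))^2"

definition phi :: "'a set \<Rightarrow> real \<Rightarrow> ('a \<Rightarrow> 'a \<Rightarrow> real) \<Rightarrow> ('a \<Rightarrow> 'a \<Rightarrow> real)" where
  "phi A \<Sigma> d = (\<lambda>x y. if x \<in> A \<and> y \<in> A then
      row_mean A d x + row_mean A d y - d x y - total_mean A d + \<Sigma> / real (card A)
    else undefined)"

definition psi :: "'a set \<Rightarrow> ('a \<Rightarrow> 'a \<Rightarrow> real) \<Rightarrow> ('a \<Rightarrow> 'a \<Rightarrow> real)" where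
  "psi A \<sigma> = (\<lambda>x y. if x \<in> A \<and> y \<in> A then
      (\<sigma> x x + \<sigma> y y) / 2 - \<sigma> x y
    else undefined)"

end

theory Submission
  imports Defs
begin

text \<open>On functions with zero diagonal, \<open>psi\<close> undoes \<open>phi\<close> because
  all row and total means cancel; on functions whose rows all sum to \<open>\<Sigma>\<close>, \<open>phi\<close> undoes \<open>psi\<close>
  because the means of \<open>psi \<sigma>\<close> are then determined by the diagonal of \<open>\<sigma>\<close>. The inequality
  axioms correspond since \<open>phi\<close> and \<open>psi\<close> exchange the triangle defect
  \<open>d x y + d x z - d y z - d x x\<close> of a metric with the defect \<open>\<sigma> x x - (\<sigma> x y + \<sigma> x z - \<sigma> y z)\<close>
  of a proximity; the strict inequality of a proximity is the case \<open>z = y\<close>, matching the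
  positivity of a metric off the diagonal.\<close>

lemma ext2_eqI:
  assumes "ext2 A f" "ext2 A g" "\<And>x y. x \<in> A \<Longrightarrow> y \<in> A \<Longrightarrow> f x y = g x y"
  shows "f = g"
  using assms unfolding ext2_def by (metis ext)

lemma ext2_phi: "ext2 A (phi A S d)"
  by (simp add: ext2_def phi_def)

lemma ext2_psi: "ext2 A (psi A \<sigma>)"
  by (simp add: ext2_def psi_def)

lemma phi_apply:
  "x \<in> A \<Longrightarrow> y \<in> A \<Longrightarrow>
    phi A S d x y = row_mean A d x + row_mean A d y - d x y - total_mean A d + S / real (card A)"
  by (simp add: phi_def)

lemma psi_apply: "x \<in> A \<Longrightarrow> y \<in> A \<Longrightarrow> psi A \<sigma> x y = (\<sigma> x x + \<sigma> y y) / 2 - \<sigma> x y"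
  by (simp add: psi_def)

lemma card_mult_row_mean:
  assumes "finite A" "A \<noteq> {}"
  shows "real (card A) * row_mean A f x = (\<Sum>t\<in>A. f x t)"
  using assms by (simp add: row_mean_def)

lemma sum_row_mean: "(\<Sum>x\<in>A. row_mean A f x) = real (card A) * total_mean A f"
  by (cases "card A = 0")
    (simp_all add: row_mean_def total_mean_def sum_divide_distrib[symmetric] power2_eq_square)

lemma sum_phi_row:
  assumes "finite A" "A \<noteq> {}" "x \<in> A"
  shows "(\<Sum>t\<in>A. phi A S d x t) = S"
proof -
  define n where "n = real (card A)"
  have "n \<noteq> 0" using assms by (simp add: n_def)
  have "(\<Sum>t\<in>A. phi A S d x t)
      = (\<Sum>t\<in>A. row_mean A d x + row_mean A d t - d x t - total_mean A d + S / n)"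
    using assms(3) by (intro sum.cong) (simp_all add: phi_apply n_def)
  also have "\<dots> = n * row_mean A d x + (\<Sum>t\<in>A. row_mean A d t) - (\<Sum>t\<in>A. d x t)
      - n * total_mean A d + n * (S / n)"
    by (simp add: sum.distrib sum_subtractf n_def)
  also have "\<dots> = S"
    using \<open>n \<noteq> 0\<close> card_mult_row_mean[OF assms(1,2)] by (simp add: sum_row_mean n_def)
  finally show ?thesis .
qed

lemma phi_triangle_defect:
  assumes "x \<in> A" "y \<in> A" "z \<in> A"
  shows "phi A S d x x - (phi A S d x y + phi A S d x z - phi A S d y z)
    = d x y + d x z - d y z - d x x"
  using assms by (simp add: phi_apply)

lemma psi_triangle_defect:
  assumes "x \<in> A" "y \<in> A" "z \<in> A"
  shows "psi A \<sigma> x y + psi A \<sigma> x z - psi A \<sigma> y z - psi A \<sigma> x x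
    = \<sigma> x x - (\<sigma> x y + \<sigma> x z - \<sigma> y z)"
  using assms by (simp add: psi_apply field_simps)

lemma is_proximity_phi:
  assumes "finite A" "A \<noteq> {}" "is_metric A d"
  shows "is_proximity A S (phi A S d)"
  unfolding is_proximity_def
proof (intro conjI ballI impI)
  have triangle: "d x y + d x z - d y z \<ge> 0" and diag: "d x x = 0"
    and pos: "d x y = 0 \<longleftrightarrow> x = y" if "x \<in> A" "y \<in> A" "z \<in> A" for x y z
    using assms(3) that unfolding is_metric_def by auto
  show "ext2 A (phi A S d)" by (rule ext2_phi)
  show "(\<Sum>t\<in>A. phi A S d x t) = S" if "x \<in> A" for x
    using sum_phi_row[OF assms(1,2) that] .
  fix x y assume xy: "x \<in> A" "y \<in> A"
  show "phi A S d x y + phi A S d x z - phi A S d y z \<le> phi A S d x x" if "z \<in> A" for z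
    using phi_triangle_defect[of x A y z S d, OF xy that]
      triangle[OF xy that] diag[OF xy that]
    by linarith
  assume "x \<noteq> y"
  then have "d x y > 0"
    using triangle[OF xy xy(2)] diag[OF xy(2) xy] pos[OF xy xy(2)] by linarith
  then show "phi A S d x y + phi A S d x y - phi A S d y y < phi A S d x x"
    using phi_triangle_defect[of x A y y S d, OF xy xy(2)]
      diag[OF xy xy(1)] diag[OF xy(2) xy]
    by linarith
qed

lemma is_metric_psi:
  assumes "is_proximity A S \<sigma>"
  shows "is_metric A (psi A \<sigma>)"
  unfolding is_metric_def
proof (intro conjI ballI)
  have triangle: "\<sigma> x y + \<sigma> x z - \<sigma> y z \<le> \<sigma> x x"
    and strict: "x \<noteq> y \<Longrightarrow> \<sigma> x y + \<sigma> x y - \<sigma> y y < \<sigma> x x"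
    if "x \<in> A" "y \<in> A" "z \<in> A" for x y z
    using assms that unfolding is_proximity_def by auto
  have diag: "psi A \<sigma> x x = 0" if "x \<in> A" for x
    using that by (simp add: psi_apply)
  show "ext2 A (psi A \<sigma>)" by (rule ext2_psi)
  fix x y assume xy: "x \<in> A" "y \<in> A"
  show "psi A \<sigma> x y = 0 \<longleftrightarrow> x = y"
    using psi_triangle_defect[of x A y y \<sigma>, OF xy xy(2)]
      strict[OF xy xy(2)] diag xy
    by fastforce
  show "psi A \<sigma> x y + psi A \<sigma> x z - psi A \<sigma> y z \<ge> 0" if "z \<in> A" for z
    using psi_triangle_defect[of x A y z \<sigma>, OF xy that]
      triangle[OF xy that] diag[OF xy(1)]
    by linarith
qed

lemma psi_phi:
  assumes "ext2 A d" "\<And>x. x \<in> A \<Longrightarrow> d x x = 0"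
  shows "psi A (phi A S d) = d"
  using assms(1) by (rule ext2_eqI[OF ext2_psi])
    (simp add: psi_apply phi_apply assms(2) field_simps)

lemma row_mean_psi:
  assumes "finite A" "A \<noteq> {}" "x \<in> A" "(\<Sum>t\<in>A. \<sigma> x t) = S"
  shows "row_mean A (psi A \<sigma>) x
    = \<sigma> x x / 2 + (\<Sum>t\<in>A. \<sigma> t t) / (2 * real (card A)) - S / real (card A)"
proof -
  have "(\<Sum>t\<in>A. psi A \<sigma> x t) = (\<Sum>t\<in>A. \<sigma> x x / 2 + \<sigma> t t / 2 - \<sigma> x t)"
    using assms(3) by (intro sum.cong) (simp_all add: psi_apply add_divide_distrib)
  also have "\<dots> = real (card A) * \<sigma> x x / 2 + (\<Sum>t\<in>A. \<sigma> t t) / 2 - S"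
    using assms(4) by (simp add: sum.distrib sum_subtractf sum_divide_distrib)
  finally have row_sum: "(\<Sum>t\<in>A. psi A \<sigma> x t)
      = real (card A) * \<sigma> x x / 2 + (\<Sum>t\<in>A. \<sigma> t t) / 2 - S" .
  show ?thesis
    unfolding row_mean_def row_sum using assms(1,2) by (simp add: field_simps)
qed

lemma total_mean_psi:
  assumes "finite A" "A \<noteq> {}" "\<And>x. x \<in> A \<Longrightarrow> (\<Sum>t\<in>A. \<sigma> x t) = S"
  shows "total_mean A (psi A \<sigma>) = (\<Sum>t\<in>A. \<sigma> t t) / real (card A) - S / real (card A)"
proof -
  define n where "n = real (card A)"
  have "n \<noteq> 0" using assms by (simp add: n_def)
  have "n * total_mean A (psi A \<sigma>)
      = (\<Sum>x\<in>A. \<sigma> x x / 2 + (\<Sum>t\<in>A. \<sigma> t t) / (2 * n) - S / n)"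
    unfolding n_def sum_row_mean[symmetric] using assms
    by (intro sum.cong) (simp_all add: row_mean_psi)
  also have "\<dots> = (\<Sum>t\<in>A. \<sigma> t t) - S"
    using \<open>n \<noteq> 0\<close> by (simp add: sum.distrib sum_subtractf sum_divide_distrib[symmetric] n_def)
  finally show ?thesis
    using \<open>n \<noteq> 0\<close> by (simp add: n_def field_simps)
qed

lemma phi_psi:
  assumes "finite A" "A \<noteq> {}" "ext2 A \<sigma>" "\<And>x. x \<in> A \<Longrightarrow> (\<Sum>t\<in>A. \<sigma> x t) = S"
  shows "phi A S (psi A \<sigma>) = \<sigma>"
  using assms(3)
proof (rule ext2_eqI[OF ext2_phi])
  fix x y assume "x \<in> A" "y \<in> A"
  then show "phi A S (psi A \<sigma>) x y = \<sigma> x y"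
    using assms by (simp add: phi_apply psi_apply row_mean_psi total_mean_psi field_simps)
qed

theorem theorem1:
  fixes A :: "'a set" and \<Sigma> :: real
  assumes "finite A" and "A \<noteq> {}"
  shows "bij_betw (phi A \<Sigma>) {d. is_metric A d} {\<sigma>. is_proximity A \<Sigma> \<sigma>}
    \<and> (\<forall>\<sigma>. is_proximity A \<Sigma> \<sigma> \<longrightarrow> is_metric A (psi A \<sigma>) \<and> phi A \<Sigma> (psi A \<sigma>) = \<sigma>)
    \<and> (\<forall>d. is_metric A d \<longrightarrow> psi A (phi A \<Sigma> d) = d)"
proof -
  have psi_phi_metric: "psi A (phi A \<Sigma> d) = d" if "is_metric A d" for d
    using that by (intro psi_phi) (auto simp: is_metric_def)
  have phi_psi_proximity: "phi A \<Sigma> (psi A \<sigma>) = \<sigma>" if "is_proximity A \<Sigma> \<sigma>" for \<sigma>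
    using that assms by (intro phi_psi) (auto simp: is_proximity_def)
  have "bij_betw (phi A \<Sigma>) {d. is_metric A d} {\<sigma>. is_proximity A \<Sigma> \<sigma>}"
    by (rule bij_betw_byWitness[where f' = "psi A"])
      (auto intro: psi_phi_metric phi_psi_proximity is_proximity_phi[OF assms] is_metric_psi)
  then show ?thesis
    using psi_phi_metric phi_psi_proximity is_metric_psi by blast
qed

end
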